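(* Consider the family of discrete-time load balancing systems described in the context under a throughput optimal Markovian policy, and assume $(\sigma_\Sigma^{(\epsilon)})^2\to\sigma_\Sigma^2$ as $\epsilon\downarrow0$. Then the policy is heavy-traffic delay optimal in steady state (i.e. $\limsup_{\epsilon\downarrow0}\epsilon\,\mathbb{E}[\sum_{n=1}^N\overline{Q}^{(\epsilon)}_n]\le\zeta/2$ with $\zeta=\sigma_\Sigma^2+\nu_\Sigma^2$) if and only if $$\lim_{\epsilon\downarrow0}\mathbb{E}\big[\|\overline{\mathbf{Q}}^{(\epsilon)}(t+1)\|_1\,\|\overline{\mathbf{U}}^{(\epsilon)}(t)\|_1\big]=0 .$$
   Context: Model: a discrete-time system with one dispatcher and $N$ servers; server $n$ has an infinite-buffer FIFO queue of length $Q_n(t)$ at the beginning of slot $t$. Arrivals $A_\Sigma(t)$: integer valued, i.i.d. over $t$, mean $\lambda_\Sigma$, variance $\sigma_\Sigma^2$, $\mathbb{P}(A_\Sigma(t)=0)>0$, $A_\Sigma(t)\le A_{\max}<\infty$. Service $S_n(t)$: integer valued, i.i.d. over $t$, independent across servers and of arrivals, $S_n(t)\le S_{\max}<\infty$, mean $\mu_n$, variance $\nu_n^2$; $\mu_\Sigma=\sum_n\mu_n$, $\nu^2_\Sigma=\sum_n\nu_n^2$. In each slot the arrivals are routed to one queue by a rule depending only on $\mathbf{Q}(t)$; $A_n(t)$ is the number routed to queue $n$. Dynamics: $Q_n(t+1)=Q_n(t)+A_n(t)-S_n(t)+U_n(t)$, $U_n(t)=\max\{S_n(t)-Q_n(t)-A_n(t),0\}$.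 Family indexed by $\epsilon>0$: arrivals $A_\Sigma^{(\epsilon)}(t)$ with mean $\mu_\Sigma-\epsilon$ and variance $(\sigma^{(\epsilon)}_\Sigma)^2$. Throughput optimal: for every $\epsilon>0$ the chain $\{\mathbf{Q}(t)\}$ is positive recurrent and all moments of the stationary $\|\overline{\mathbf{Q}}^{(\epsilon)}\|$ are finite. In the displayed expectation, $\overline{\mathbf{Q}}^{(\epsilon)}(t)$ is distributed according to the stationary distribution, $\overline{\mathbf{U}}^{(\epsilon)}(t)$ is the unused service in slot $t$, and $\overline{\mathbf{Q}}^{(\epsilon)}(t+1)$ is the resulting next state. $\|\mathbf{x}\|_1=\sum_n|x_n|$. *)

theory Defs
  imports "HOL-Probability.Probability"
begin

text \<open>One slot of the load-balancing system: arrival batch a ~ A, independent service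
  vector s ~ product of the S n, and (possibly randomised) routing i ~ r q depending
  only on the current queue vector q.  The result is the pair (U(t), Q(t+1)) where
  U(t) is the unused service and Q(t+1) the next state (nat subtraction truncates,
  so q+a-s in nat equals q+a-s+U).\<close>

definition lb_step ::
  "nat pmf \<Rightarrow> ('n::finite \<Rightarrow> nat pmf) \<Rightarrow> (('n \<Rightarrow> nat) \<Rightarrow> 'n pmf)
     \<Rightarrow> ('n \<Rightarrow> nat) \<Rightarrow> (('n \<Rightarrow> nat) \<times> ('n \<Rightarrow> nat)) pmf" where
  "lb_step A S r q =
     bind_pmf A (\<lambda>a. bind_pmf (Pi_pmf UNIV 0 S) (\<lambda>s. bind_pmf (r q) (\<lambda>i.
       (let qa = (\<lambda>n. q n + (if n = i then a else 0))
        in return_pmf ((\<lambda>n. s n - qa n), (\<lambda>n. qa n - s n))))))"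

definition lb_kernel ::
  "nat pmf \<Rightarrow> ('n::finite \<Rightarrow> nat pmf) \<Rightarrow> (('n \<Rightarrow> nat) \<Rightarrow> 'n pmf)
     \<Rightarrow> ('n \<Rightarrow> nat) \<Rightarrow> ('n \<Rightarrow> nat) pmf" where
  "lb_kernel A S r q = map_pmf snd (lb_step A S r q)"

definition stationary :: "('s \<Rightarrow> 's pmf) \<Rightarrow> 's pmf \<Rightarrow> bool" where
  "stationary K p \<longleftrightarrow> bind_pmf p K = p"

definition norm1 :: "('n::finite \<Rightarrow> nat) \<Rightarrow> real" where
  "norm1 x = real (\<Sum>n\<in>UNIV. x n)"

text \<open>Throughput optimality for the family A (indexed by eps in (0, muSum)):
  the chain has a unique stationary distribution (positive recurrence), and all
  moments of the l1 norm of the stationary queue vector are finite.\<close>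
definition throughput_optimal ::
  "(real \<Rightarrow> nat pmf) \<Rightarrow> ('n::finite \<Rightarrow> nat pmf) \<Rightarrow> (('n \<Rightarrow> nat) \<Rightarrow> 'n pmf) \<Rightarrow> real \<Rightarrow> bool" where
  "throughput_optimal A S r muSum \<longleftrightarrow>
     (\<forall>eps. 0 < eps \<and> eps < muSum \<longrightarrow>
        (\<exists>!p. stationary (lb_kernel (A eps) S r) p) \<and>
        (\<forall>p. stationary (lb_kernel (A eps) S r) p \<longrightarrow>
              (\<forall>k::nat. integrable (measure_pmf p) (\<lambda>q. norm1 q ^ k))))"

end

theory Submission
  imports Defs
begin

(* Write X, Y and U for the l1 norms of Q(t), Q(t+1) and U(t) in steady state. The dynamics give
   Y - U = X + A - |S| with the increment A - |S| independent of X, and stationarity makes Y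
   distributed like X. Comparing first moments gives E U = eps; comparing second moments gives
     eps E X = (Var A + nu_Sigma^2 + eps^2 - E U^2) / 2 + E (Y U).
   Since U <= N Smax, E U^2 <= N Smax eps tends to 0, so the first term tends to zeta/2. The
   second term is nonnegative, hence limsup eps E X <= zeta/2 exactly when E (Y U) tends to 0. *)

lemma integral_bind_pmf_nonneg:
  fixes f :: "'b \<Rightarrow> real"
  assumes "integrable (measure_pmf (bind_pmf p N)) f"
    and "\<And>x. x \<in> set_pmf (bind_pmf p N) \<Longrightarrow> 0 \<le> f x"
    and "\<And>q. q \<in> set_pmf p \<Longrightarrow> integrable (measure_pmf (N q)) f"
    and "integrable (measure_pmf p) (\<lambda>q. measure_pmf.expectation (N q) f)"
  shows "measure_pmf.expectation (bind_pmf p N) f =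
         measure_pmf.expectation p (\<lambda>q. measure_pmf.expectation (N q) f)"
proof -
  have inner_nonneg: "0 \<le> measure_pmf.expectation (N q) f" if "q \<in> set_pmf p" for q
    using that assms(2) by (intro integral_nonneg_AE AE_pmfI) auto
  have "ennreal (measure_pmf.expectation (bind_pmf p N) f) = (\<integral>\<^sup>+x. ennreal (f x) \<partial>bind_pmf p N)"
    using assms by (intro nn_integral_eq_integral[symmetric]) (auto intro!: AE_pmfI)
  also have "\<dots> = (\<integral>\<^sup>+q. \<integral>\<^sup>+y. ennreal (f y) \<partial>N q \<partial>p)"
    by simp
  also have "\<dots> = (\<integral>\<^sup>+q. ennreal (measure_pmf.expectation (N q) f) \<partial>p)"
    using assms by (intro nn_integral_cong_AE AE_pmfI nn_integral_eq_integral) (auto intro!: AE_pmfI)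
  also have "\<dots> = ennreal (measure_pmf.expectation p (\<lambda>q. measure_pmf.expectation (N q) f))"
    using assms inner_nonneg by (intro nn_integral_eq_integral) (auto intro!: AE_pmfI)
  finally show ?thesis
    using inner_nonneg assms(2) by (subst (asm) ennreal_inj) (auto intro!: integral_nonneg_AE AE_pmfI)
qed

lemma integrable_pair_pmf_fst:
  fixes f :: "'a \<Rightarrow> 'c::{banach, second_countable_topology}"
  shows "integrable (measure_pmf A) f \<Longrightarrow> integrable (measure_pmf (pair_pmf A B)) (\<lambda>z. f (fst z))"
  using integrable_map_pmf_eq[of fst "pair_pmf A B" f] by (simp add: map_fst_pair_pmf)

lemma integrable_pair_pmf_snd:
  fixes g :: "'b \<Rightarrow> 'c::{banach, second_countable_topology}"
  shows "integrable (measure_pmf B) g \<Longrightarrow> integrable (measure_pmf (pair_pmf A B)) (\<lambda>z. g (snd z))"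
  using integrable_map_pmf_eq[of snd "pair_pmf A B" g] by (simp add: map_snd_pair_pmf)

lemma expectation_pair_pmf_add:
  fixes f :: "'a \<Rightarrow> real" and g :: "'b \<Rightarrow> real"
  assumes "integrable (measure_pmf A) f" and "integrable (measure_pmf B) g"
  shows "measure_pmf.expectation (pair_pmf A B) (\<lambda>z. f (fst z) + g (snd z)) =
         measure_pmf.expectation A f + measure_pmf.expectation B g"
  using assms by (simp add: integrable_pair_pmf_fst integrable_pair_pmf_snd)

lemma integrable_pair_pmf_add_square:
  fixes f :: "'a \<Rightarrow> real" and g :: "'b \<Rightarrow> real"
  assumes "integrable (measure_pmf A) (\<lambda>x. (f x)\<^sup>2)" and "integrable (measure_pmf B) (\<lambda>y. (g y)\<^sup>2)"
  shows "integrable (measure_pmf (pair_pmf A B)) (\<lambda>z. (f (fst z) + g (snd z))\<^sup>2)"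
proof (rule Bochner_Integration.integrable_bound)
  show "integrable (measure_pmf (pair_pmf A B)) (\<lambda>z. 2 * (f (fst z))\<^sup>2 + 2 * (g (snd z))\<^sup>2)"
    using assms by (intro Bochner_Integration.integrable_add integrable_mult_right
        integrable_pair_pmf_fst[where f = "\<lambda>x. (f x)\<^sup>2"] integrable_pair_pmf_snd[where g = "\<lambda>y. (g y)\<^sup>2"])
  show "AE z in measure_pmf (pair_pmf A B).
          norm ((f (fst z) + g (snd z))\<^sup>2) \<le> norm (2 * (f (fst z))\<^sup>2 + 2 * (g (snd z))\<^sup>2)"
  proof (intro AE_pmfI)
    fix z
    have "0 \<le> (f (fst z) - g (snd z))\<^sup>2"
      by simp
    then have "(f (fst z) + g (snd z))\<^sup>2 \<le> 2 * (f (fst z))\<^sup>2 + 2 * (g (snd z))\<^sup>2"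
      by (simp add: power2_sum power2_diff)
    then show "norm ((f (fst z) + g (snd z))\<^sup>2) \<le> norm (2 * (f (fst z))\<^sup>2 + 2 * (g (snd z))\<^sup>2)"
      by simp
  qed
qed simp

lemma expectation_pair_pmf_add_square:
  fixes f :: "'a \<Rightarrow> real" and g :: "'b \<Rightarrow> real"
  assumes f: "integrable (measure_pmf A) f" "integrable (measure_pmf A) (\<lambda>x. (f x)\<^sup>2)"
    and g: "integrable (measure_pmf B) g" "integrable (measure_pmf B) (\<lambda>y. (g y)\<^sup>2)"
  shows "measure_pmf.expectation (pair_pmf A B) (\<lambda>z. (f (fst z) + g (snd z))\<^sup>2) =
         measure_pmf.expectation A (\<lambda>x. (f x)\<^sup>2)
         + 2 * measure_pmf.expectation A f * measure_pmf.expectation B g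
         + measure_pmf.expectation B (\<lambda>y. (g y)\<^sup>2)"
proof -
  have pair_eq: "pair_pmf A B = bind_pmf A (\<lambda>x. map_pmf (Pair x) B)"
    unfolding pair_pmf_def by (simp add: map_pmf_def)
  have inner_integrable: "integrable (measure_pmf B) (\<lambda>y. (f x + g y)\<^sup>2)" for x
    using g by (simp add: power2_sum)
  have inner: "measure_pmf.expectation B (\<lambda>y. (f x + g y)\<^sup>2) =
      (f x)\<^sup>2 + 2 * measure_pmf.expectation B g * f x + measure_pmf.expectation B (\<lambda>y. (g y)\<^sup>2)" for x
    using g by (simp add: power2_sum algebra_simps)
  have "measure_pmf.expectation (pair_pmf A B) (\<lambda>z. (f (fst z) + g (snd z))\<^sup>2) =
      measure_pmf.expectation A (\<lambda>x. measure_pmf.expectation B (\<lambda>y. (f x + g y)\<^sup>2))"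
    using integrable_pair_pmf_add_square[OF f(2) g(2)] f unfolding pair_eq
    by (subst integral_bind_pmf_nonneg) (auto simp: inner inner_integrable)
  also have "\<dots> = measure_pmf.expectation A (\<lambda>x. (f x)\<^sup>2 + 2 * measure_pmf.expectation B g * f x
      + measure_pmf.expectation B (\<lambda>y. (g y)\<^sup>2))"
    by (simp add: inner)
  finally show ?thesis
    using f by (simp add: algebra_simps)
qed

lemma variance_pair_pmf_add:
  fixes f :: "'a \<Rightarrow> real" and g :: "'b \<Rightarrow> real"
  assumes f: "integrable (measure_pmf A) f" "integrable (measure_pmf A) (\<lambda>x. (f x)\<^sup>2)"
    and g: "integrable (measure_pmf B) g" "integrable (measure_pmf B) (\<lambda>y. (g y)\<^sup>2)"
  shows "measure_pmf.variance (pair_pmf A B) (\<lambda>z. f (fst z) + g (snd z)) =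
         measure_pmf.variance A f + measure_pmf.variance B g"
proof -
  have "measure_pmf.variance (pair_pmf A B) (\<lambda>z. f (fst z) + g (snd z)) =
      measure_pmf.expectation (pair_pmf A B) (\<lambda>z. (f (fst z) + g (snd z))\<^sup>2)
      - (measure_pmf.expectation (pair_pmf A B) (\<lambda>z. f (fst z) + g (snd z)))\<^sup>2"
    using assms integrable_pair_pmf_add_square[OF f(2) g(2)]
    by (intro measure_pmf.variance_eq) (simp_all add: integrable_pair_pmf_fst integrable_pair_pmf_snd)
  also have "\<dots> = measure_pmf.expectation A (\<lambda>x. (f x)\<^sup>2)
      + 2 * measure_pmf.expectation A f * measure_pmf.expectation B g
      + measure_pmf.expectation B (\<lambda>y. (g y)\<^sup>2)
      - (measure_pmf.expectation A f + measure_pmf.expectation B g)\<^sup>2"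
    by (simp only: expectation_pair_pmf_add_square[OF assms] expectation_pair_pmf_add[OF f(1) g(1)])
  finally show ?thesis
    using assms by (simp add: measure_pmf.variance_eq power2_sum)
qed

lemma expectation_Pi_pmf_sum:
  fixes f :: "'a \<Rightarrow> real"
  assumes "finite I" and "\<And>i. i \<in> I \<Longrightarrow> integrable (measure_pmf (P i)) f"
  shows "measure_pmf.expectation (Pi_pmf I d P) (\<lambda>s. \<Sum>i\<in>I. f (s i)) =
         (\<Sum>i\<in>I. measure_pmf.expectation (P i) f)"
proof -
  have component: "map_pmf (\<lambda>s. s i) (Pi_pmf I d P) = P i" if "i \<in> I" for i
    using Pi_pmf_component[OF \<open>finite I\<close>, of i d P] that by simp
  have "integrable (measure_pmf (Pi_pmf I d P)) (\<lambda>s. f (s i))" if "i \<in> I" for i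
    using integrable_map_pmf_eq[of "\<lambda>s. s i" "Pi_pmf I d P" f] assms(2) that by (simp add: component)
  moreover have "measure_pmf.expectation (Pi_pmf I d P) (\<lambda>s. f (s i)) = measure_pmf.expectation (P i) f"
    if "i \<in> I" for i
    using integral_map_pmf[of "\<lambda>s. s i" "Pi_pmf I d P" f] that by (simp add: component)
  ultimately show ?thesis
    by (simp add: Bochner_Integration.integral_sum)
qed

lemma finite_set_Pi_pmf:
  assumes "finite I" and "\<And>i. i \<in> I \<Longrightarrow> finite (set_pmf (P i))"
  shows "finite (set_pmf (Pi_pmf I d P))"
  using assms by (auto simp: set_Pi_pmf)

lemma variance_Pi_pmf_sum:
  fixes f :: "'a \<Rightarrow> real"
  assumes "finite I" and "\<And>i. i \<in> I \<Longrightarrow> finite (set_pmf (P i))"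
  shows "measure_pmf.variance (Pi_pmf I d P) (\<lambda>s. \<Sum>i\<in>I. f (s i)) =
         (\<Sum>i\<in>I. measure_pmf.variance (P i) f)"
  using assms
proof (induction I rule: finite_induct)
  case empty
  then show ?case
    by simp
next
  case (insert x I)
  have "(\<Sum>i\<in>insert x I. f ((h(x := y)) i)) = f y + (\<Sum>i\<in>I. f (h i))" for h y
    using insert.hyps by (auto intro!: sum.cong)
  then have "measure_pmf.variance (Pi_pmf (insert x I) d P) (\<lambda>s. \<Sum>i\<in>insert x I. f (s i)) =
      measure_pmf.variance (pair_pmf (P x) (Pi_pmf I d P)) (\<lambda>z. f (fst z) + (\<Sum>i\<in>I. f (snd z i)))"
    using insert.hyps by (simp add: Pi_pmf_insert case_prod_unfold)
  also have "\<dots> = measure_pmf.variance (P x) f + measure_pmf.variance (Pi_pmf I d P) (\<lambda>s. \<Sum>i\<in>I. f (s i))"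
    using insert.prems insert.hyps
    by (intro variance_pair_pmf_add integrable_measure_pmf_finite finite_set_Pi_pmf) auto
  finally show ?case
    using insert by simp
qed

lemma norm1_nonneg [simp]: "0 \<le> norm1 x"
  by (simp add: norm1_def sum_nonneg)

lemma norm1_tsub_diff: "norm1 (\<lambda>n. x n - y n) - norm1 (\<lambda>n. y n - x n) = norm1 x - norm1 y"
proof -
  have "real (x n - y n) - real (y n - x n) = real (x n) - real (y n)" for n
    by (cases "x n \<le> y n") (simp_all add: of_nat_diff)
  then show ?thesis
    unfolding norm1_def of_nat_sum sum_subtractf[symmetric] by simp
qed

lemma norm1_add_single: "norm1 (\<lambda>n. q n + (if n = i then a else 0)) = norm1 q + real a"
  by (simp add: norm1_def sum.distrib)

lemma map_lb_step_drift:
  "map_pmf (\<lambda>(u, q'). norm1 q' - norm1 u) (lb_step A S r q) =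
   map_pmf (\<lambda>(a, s). norm1 q + (real a - norm1 s)) (pair_pmf A (Pi_pmf UNIV 0 S))"
  unfolding lb_step_def pair_pmf_def Let_def
  by (simp add: map_bind_pmf norm1_tsub_diff norm1_add_single add_diff_eq)

lemma map_bind_lb_step_drift:
  "map_pmf (\<lambda>(u, q'). norm1 q' - norm1 u) (bind_pmf p (lb_step A S r)) =
   map_pmf (\<lambda>(q, a, s). norm1 q + (real a - norm1 s)) (pair_pmf p (pair_pmf A (Pi_pmf UNIV 0 S)))"
  unfolding map_bind_pmf map_lb_step_drift
  by (simp add: pair_pmf_def map_bind_pmf bind_map_pmf map_pmf_def[symmetric] pmf.map_comp o_def)

lemma norm1_unused_le_lb_step:
  fixes u :: "'n::finite \<Rightarrow> nat"
  assumes "\<forall>n. \<forall>s \<in> set_pmf (S n). s \<le> Smax" and "(u, q') \<in> set_pmf (lb_step A S r q)"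
  shows "norm1 u \<le> real (CARD('n) * Smax)"
proof -
  have "u n \<le> Smax" for n
    using assms by (auto simp: lb_step_def Let_def set_Pi_pmf PiE_dflt_def intro: le_trans[OF diff_le_self])
  then have "(\<Sum>n\<in>UNIV. u n) \<le> (\<Sum>n\<in>(UNIV :: 'n set). Smax)"
    by (intro sum_mono)
  then show ?thesis
    unfolding norm1_def by (simp only: of_nat_le_iff) simp
qed

lemma map_snd_bind_lb_step:
  "stationary (lb_kernel A S r) p \<Longrightarrow> map_pmf snd (bind_pmf p (lb_step A S r)) = p"
  by (simp add: stationary_def lb_kernel_def[abs_def] map_bind_pmf)

locale stationary_lb =
  fixes A :: "nat pmf" and S :: "'n::finite \<Rightarrow> nat pmf" and r :: "('n \<Rightarrow> nat) \<Rightarrow> 'n pmf"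
    and Smax :: nat and p :: "('n \<Rightarrow> nat) pmf"
  assumes finite_arrivals: "finite (set_pmf A)"
    and service_le: "\<forall>n. \<forall>s \<in> set_pmf (S n). s \<le> Smax"
    and stationary: "stationary (lb_kernel A S r) p"
    and square_integrable: "integrable (measure_pmf p) (\<lambda>q. (norm1 q)\<^sup>2)"
begin

abbreviation service :: "('n \<Rightarrow> nat) pmf" where
  "service \<equiv> Pi_pmf UNIV 0 S"

abbreviation slot :: "(('n \<Rightarrow> nat) \<times> ('n \<Rightarrow> nat)) pmf" where
  "slot \<equiv> bind_pmf p (lb_step A S r)"

lemma finite_service_component: "finite (set_pmf (S n))"
  using service_le by (auto intro: finite_subset[of _ "{..Smax}"])

lemma finite_service: "finite (set_pmf service)"
  by (simp add: finite_set_Pi_pmf finite_service_component)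

lemma expectation_service:
  "measure_pmf.expectation service norm1 = (\<Sum>n\<in>UNIV. measure_pmf.expectation (S n) real)"
  unfolding norm1_def of_nat_sum
  by (simp add: expectation_Pi_pmf_sum integrable_measure_pmf_finite finite_service_component)

lemma variance_service:
  "measure_pmf.variance service norm1 = (\<Sum>n\<in>UNIV. measure_pmf.variance (S n) real)"
  unfolding norm1_def of_nat_sum
  by (simp add: variance_Pi_pmf_sum finite_service_component)

lemma integrable_norm1: "integrable (measure_pmf p) norm1"
  by (rule measure_pmf.square_integrable_imp_integrable[OF _ square_integrable]) simp

lemma integrable_arrivals_service:
  fixes f :: "nat \<times> ('n \<Rightarrow> nat) \<Rightarrow> real"
  shows "integrable (measure_pmf (pair_pmf A service)) f"
  using finite_arrivals finite_service by (simp add: integrable_measure_pmf_finite)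

lemma expectation_increment:
  "measure_pmf.expectation (pair_pmf A service) (\<lambda>z. real (fst z) - norm1 (snd z)) =
   measure_pmf.expectation A real - measure_pmf.expectation service norm1"
  using expectation_pair_pmf_add[of A real service "\<lambda>s. - norm1 s"] finite_arrivals finite_service
  by (simp add: integrable_measure_pmf_finite)

lemma variance_increment:
  "measure_pmf.variance (pair_pmf A service) (\<lambda>z. real (fst z) - norm1 (snd z)) =
   measure_pmf.variance A real + measure_pmf.variance service norm1"
  using variance_pair_pmf_add[of A real service "\<lambda>s. - norm1 s"] finite_arrivals finite_service
  by (simp add: integrable_measure_pmf_finite power2_commute)

lemma expectation_increment_square:
  "measure_pmf.expectation (pair_pmf A service) (\<lambda>z. (real (fst z) - norm1 (snd z))\<^sup>2) =
   measure_pmf.variance A real + measure_pmf.variance service norm1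
   + (measure_pmf.expectation service norm1 - measure_pmf.expectation A real)\<^sup>2"
proof -
  let ?g = "\<lambda>z. real (fst z) - norm1 (snd z)"
  have "measure_pmf.variance (pair_pmf A service) ?g =
      measure_pmf.expectation (pair_pmf A service) (\<lambda>z. (?g z)\<^sup>2)
      - (measure_pmf.expectation (pair_pmf A service) ?g)\<^sup>2"
    by (rule measure_pmf.variance_eq[OF integrable_arrivals_service integrable_arrivals_service])
  moreover have "(measure_pmf.expectation (pair_pmf A service) ?g)\<^sup>2 =
      (measure_pmf.expectation service norm1 - measure_pmf.expectation A real)\<^sup>2"
    by (simp only: expectation_increment power2_commute)
  ultimately show ?thesis
    using variance_increment by linarith
qed

lemma norm1_unused_le:
  assumes "x \<in> set_pmf slot"
  shows "norm1 (fst x) \<le> real (CARD('n) * Smax)"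
proof -
  from assms obtain q where "(fst x, snd x) \<in> set_pmf (lb_step A S r q)"
    by auto
  then show ?thesis
    by (rule norm1_unused_le_lb_step[OF service_le])
qed

lemma expectation_slot_next:
  fixes f :: "('n \<Rightarrow> nat) \<Rightarrow> real"
  shows "measure_pmf.expectation slot (\<lambda>x. f (snd x)) = measure_pmf.expectation p f"
  using integral_map_pmf[of snd slot f] by (simp add: map_snd_bind_lb_step[OF stationary])

lemma integrable_slot_next:
  fixes f :: "('n \<Rightarrow> nat) \<Rightarrow> real"
  shows "integrable (measure_pmf p) f \<Longrightarrow> integrable (measure_pmf slot) (\<lambda>x. f (snd x))"
  using integrable_map_pmf_eq[of snd slot f] by (simp add: map_snd_bind_lb_step[OF stationary])

lemma integrable_slot_unused:
  "integrable (measure_pmf slot) (\<lambda>x. norm1 (fst x))"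
  "integrable (measure_pmf slot) (\<lambda>x. (norm1 (fst x))\<^sup>2)"
  "integrable (measure_pmf slot) (\<lambda>x. norm1 (snd x) * norm1 (fst x))"
proof -
  let ?K = "real (CARD('n) * Smax)"
  show "integrable (measure_pmf slot) (\<lambda>x. norm1 (fst x))"
    by (rule measure_pmf.integrable_const_bound[where B = ?K])
      (intro AE_pmfI, simp only: real_norm_def abs_of_nonneg[OF norm1_nonneg] norm1_unused_le, simp)
  show "integrable (measure_pmf slot) (\<lambda>x. (norm1 (fst x))\<^sup>2)"
    by (rule measure_pmf.integrable_const_bound[where B = "?K\<^sup>2"])
      (intro AE_pmfI, simp add: power_mono norm1_unused_le del: of_nat_mult, simp)
  show "integrable (measure_pmf slot) (\<lambda>x. norm1 (snd x) * norm1 (fst x))"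
  proof (rule Bochner_Integration.integrable_bound)
    show "integrable (measure_pmf slot) (\<lambda>x. norm1 (snd x) * ?K)"
      using integrable_slot_next[OF integrable_norm1] by simp
    show "AE x in measure_pmf slot. norm (norm1 (snd x) * norm1 (fst x)) \<le> norm (norm1 (snd x) * ?K)"
    proof (intro AE_pmfI)
      fix x
      assume "x \<in> set_pmf slot"
      then have "norm1 (fst x) \<le> ?K"
        by (rule norm1_unused_le)
      then show "norm (norm1 (snd x) * norm1 (fst x)) \<le> norm (norm1 (snd x) * ?K)"
        by (simp add: abs_mult mult_left_mono del: of_nat_mult)
    qed
  qed simp
qed

lemma expectation_slot_drift:
  fixes f :: "real \<Rightarrow> real"
  shows "measure_pmf.expectation slot (\<lambda>x. f (norm1 (snd x) - norm1 (fst x))) =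
   measure_pmf.expectation (pair_pmf p (pair_pmf A service))
     (\<lambda>z. f (norm1 (fst z) + (real (fst (snd z)) - norm1 (snd (snd z)))))"
proof -
  have "measure_pmf.expectation slot (\<lambda>x. f (norm1 (snd x) - norm1 (fst x))) =
      measure_pmf.expectation (map_pmf (\<lambda>(u, q'). norm1 q' - norm1 u) slot) f"
    by (simp add: case_prod_unfold)
  also have "\<dots> = measure_pmf.expectation
      (map_pmf (\<lambda>(q, a, s). norm1 q + (real a - norm1 s)) (pair_pmf p (pair_pmf A service))) f"
    by (simp only: map_bind_lb_step_drift)
  finally show ?thesis
    by (simp add: case_prod_unfold)
qed

lemma expectation_unused_service:
  "measure_pmf.expectation slot (\<lambda>x. norm1 (fst x)) =
   measure_pmf.expectation service norm1 - measure_pmf.expectation A real"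
proof -
  have "measure_pmf.expectation slot (\<lambda>x. norm1 (snd x) - norm1 (fst x)) =
      measure_pmf.expectation (pair_pmf p (pair_pmf A service))
        (\<lambda>z. norm1 (fst z) + (real (fst (snd z)) - norm1 (snd (snd z))))"
    using expectation_slot_drift[of "\<lambda>d. d"] by simp
  also have "\<dots> = measure_pmf.expectation p norm1
      + (measure_pmf.expectation A real - measure_pmf.expectation service norm1)"
    using expectation_pair_pmf_add[OF integrable_norm1 integrable_arrivals_service,
        of "\<lambda>z. real (fst z) - norm1 (snd z)"]
    by (simp add: expectation_increment)
  finally show ?thesis
    by (simp add: expectation_slot_next integrable_slot_next integrable_norm1 integrable_slot_unused)
qed

lemma expectation_unused_service_square_le:
  "measure_pmf.expectation slot (\<lambda>x. (norm1 (fst x))\<^sup>2) \<le>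
   real (CARD('n) * Smax) * measure_pmf.expectation slot (\<lambda>x. norm1 (fst x))"
proof -
  have "(norm1 (fst x))\<^sup>2 \<le> real (CARD('n) * Smax) * norm1 (fst x)" if "x \<in> set_pmf slot" for x
    using norm1_unused_le[OF that] by (simp add: power2_eq_square mult_right_mono del: of_nat_mult)
  then have "measure_pmf.expectation slot (\<lambda>x. (norm1 (fst x))\<^sup>2) \<le>
      measure_pmf.expectation slot (\<lambda>x. real (CARD('n) * Smax) * norm1 (fst x))"
    by (intro integral_mono_AE AE_pmfI integrable_slot_unused integrable_mult_right) auto
  then show ?thesis
    by simp
qed

lemma drift_square_identity:
  "(measure_pmf.expectation service norm1 - measure_pmf.expectation A real) * measure_pmf.expectation p norm1 =
   (measure_pmf.variance A real + measure_pmf.variance service norm1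
    + (measure_pmf.expectation service norm1 - measure_pmf.expectation A real)\<^sup>2
    - measure_pmf.expectation slot (\<lambda>x. (norm1 (fst x))\<^sup>2)) / 2
   + measure_pmf.expectation slot (\<lambda>(u, q'). norm1 q' * norm1 u)"
proof -
  let ?g = "\<lambda>z. real (fst z) - norm1 (snd z)"
  let ?\<delta> = "measure_pmf.expectation service norm1 - measure_pmf.expectation A real"
  have "measure_pmf.expectation slot (\<lambda>x. (norm1 (snd x) - norm1 (fst x))\<^sup>2) =
      measure_pmf.expectation p (\<lambda>q. (norm1 q)\<^sup>2) - 2 * measure_pmf.expectation p norm1 * ?\<delta>
      + measure_pmf.variance A real + measure_pmf.variance service norm1 + ?\<delta>\<^sup>2"
    using expectation_slot_drift[of "\<lambda>d. d\<^sup>2"]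
      expectation_pair_pmf_add_square[where g = ?g, OF integrable_norm1 square_integrable
        integrable_arrivals_service integrable_arrivals_service]
    by (simp add: expectation_increment expectation_increment_square algebra_simps)
  moreover have "measure_pmf.expectation slot (\<lambda>x. (norm1 (snd x) - norm1 (fst x))\<^sup>2) =
      measure_pmf.expectation p (\<lambda>q. (norm1 q)\<^sup>2)
      - 2 * measure_pmf.expectation slot (\<lambda>x. norm1 (snd x) * norm1 (fst x))
      + measure_pmf.expectation slot (\<lambda>x. (norm1 (fst x))\<^sup>2)"
    using integrable_slot_next[OF square_integrable] integrable_slot_unused
    by (simp add: power2_diff expectation_slot_next[of "\<lambda>q. (norm1 q)\<^sup>2"] mult.assoc)
  ultimately show ?thesis
    by (simp add: case_prod_unfold field_simps)
qed

lemma heavy_traffic_identity: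
  fixes \<mu> \<nu> :: "'n \<Rightarrow> real"
  assumes "\<forall>n. \<mu> n = measure_pmf.expectation (S n) real"
    and "\<forall>n. \<nu> n ^ 2 = measure_pmf.variance (S n) real"
    and "measure_pmf.expectation A real = (\<Sum>n\<in>UNIV. \<mu> n) - eps"
  shows "eps * measure_pmf.expectation p norm1 =
           (measure_pmf.variance A real + (\<Sum>n\<in>UNIV. \<nu> n ^ 2) + eps\<^sup>2
            - measure_pmf.expectation slot (\<lambda>x. (norm1 (fst x))\<^sup>2)) / 2
           + measure_pmf.expectation slot (\<lambda>(u, q'). norm1 q' * norm1 u)"
    and "0 \<le> measure_pmf.expectation slot (\<lambda>(u, q'). norm1 q' * norm1 u)"
    and "0 \<le> measure_pmf.expectation slot (\<lambda>x. (norm1 (fst x))\<^sup>2)"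
    and "measure_pmf.expectation slot (\<lambda>x. (norm1 (fst x))\<^sup>2) \<le> real (CARD('n) * Smax) * eps"
proof -
  have "measure_pmf.expectation service norm1 - measure_pmf.expectation A real = eps"
    using expectation_service assms(1,3) by simp
  moreover have "measure_pmf.variance service norm1 = (\<Sum>n\<in>UNIV. \<nu> n ^ 2)"
    using variance_service assms(2) by simp
  ultimately show "eps * measure_pmf.expectation p norm1 =
           (measure_pmf.variance A real + (\<Sum>n\<in>UNIV. \<nu> n ^ 2) + eps\<^sup>2
            - measure_pmf.expectation slot (\<lambda>x. (norm1 (fst x))\<^sup>2)) / 2
           + measure_pmf.expectation slot (\<lambda>(u, q'). norm1 q' * norm1 u)"
    and "measure_pmf.expectation slot (\<lambda>x. (norm1 (fst x))\<^sup>2) \<le> real (CARD('n) * Smax) * eps"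
    using drift_square_identity expectation_unused_service expectation_unused_service_square_le
    by (simp_all add: mult.commute)
  show "0 \<le> measure_pmf.expectation slot (\<lambda>(u, q'). norm1 q' * norm1 u)"
    and "0 \<le> measure_pmf.expectation slot (\<lambda>x. (norm1 (fst x))\<^sup>2)"
    by (auto intro!: integral_nonneg_AE AE_pmfI)
qed

end

lemma Limsup_le_iff_remainder_tendsto_0:
  fixes f g h :: "'a \<Rightarrow> real"
  assumes "F \<noteq> bot"
    and decomp: "eventually (\<lambda>x. f x = g x + h x \<and> 0 \<le> h x) F"
    and g: "(g \<longlongrightarrow> c) F"
  shows "Limsup F (\<lambda>x. ereal (f x)) \<le> ereal c \<longleftrightarrow> (h \<longlongrightarrow> 0) F"
proof
  assume Limsup_le: "Limsup F (\<lambda>x. ereal (f x)) \<le> ereal c"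
  show "(h \<longlongrightarrow> 0) F"
  proof (rule tendstoI)
    fix e :: real
    assume "0 < e"
    then have "Limsup F (\<lambda>x. ereal (f x)) < ereal (c + e / 2)"
      using Limsup_le by (simp add: le_less_trans)
    then have "eventually (\<lambda>x. f x < c + e / 2) F"
      by (auto dest: Limsup_lessD)
    moreover have "eventually (\<lambda>x. c - e / 2 < g x) F"
      using order_tendstoD(1)[OF g, of "c - e / 2"] \<open>0 < e\<close> by simp
    ultimately show "eventually (\<lambda>x. dist (h x) 0 < e) F"
      using decomp by eventually_elim auto
  qed
next
  assume "(h \<longlongrightarrow> 0) F"
  then have "((\<lambda>x. g x + h x) \<longlongrightarrow> c) F"
    using tendsto_add[OF g] by fastforce
  moreover have "eventually (\<lambda>x. f x = g x + h x) F"
    using decomp by (rule eventually_mono) simp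
  ultimately have "(f \<longlongrightarrow> c) F"
    by (simp add: tendsto_cong)
  then show "Limsup F (\<lambda>x. ereal (f x)) \<le> ereal c"
    using lim_imp_Limsup[OF \<open>F \<noteq> bot\<close> tendsto_ereal] by simp
qed

theorem lemma3:
  fixes A :: "real \<Rightarrow> nat pmf"
    and S :: "'n::finite \<Rightarrow> nat pmf"
    and r :: "('n \<Rightarrow> nat) \<Rightarrow> 'n pmf"
    and Amax Smax :: nat
    and \<mu> \<nu> :: "'n \<Rightarrow> real"
    and \<sigma>2 :: real
    and \<pi> :: "real \<Rightarrow> ('n \<Rightarrow> nat) pmf"
  assumes S_bound: "\<forall>n. \<forall>s \<in> set_pmf (S n). s \<le> Smax"
    and S_mean: "\<forall>n. \<mu> n = measure_pmf.expectation (S n) real"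
    and S_var: "\<forall>n. \<nu> n \<ge> 0 \<and> \<nu> n ^ 2 = measure_pmf.variance (S n) real"
    and mu_pos: "(\<Sum>n\<in>UNIV. \<mu> n) > 0"
    and A_fam: "\<forall>eps. 0 < eps \<and> eps < (\<Sum>n\<in>UNIV. \<mu> n) \<longrightarrow>
                  (\<forall>a \<in> set_pmf (A eps). a \<le> Amax) \<and> pmf (A eps) 0 > 0 \<and>
                  measure_pmf.expectation (A eps) real = (\<Sum>n\<in>UNIV. \<mu> n) - eps"
    and A_var: "((\<lambda>eps. measure_pmf.variance (A eps) real) \<longlongrightarrow> \<sigma>2) (at_right 0)"
    and TO: "throughput_optimal A S r (\<Sum>n\<in>UNIV. \<mu> n)"
    and pi_stat: "\<forall>eps. 0 < eps \<and> eps < (\<Sum>n\<in>UNIV. \<mu> n) \<longrightarrow>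
                  stationary (lb_kernel (A eps) S r) (\<pi> eps)"
  shows "Limsup (at_right 0)
            (\<lambda>eps. ereal (eps * measure_pmf.expectation (\<pi> eps) (\<lambda>q. real (\<Sum>n\<in>UNIV. q n))))
          \<le> ereal ((\<sigma>2 + (\<Sum>n\<in>UNIV. \<nu> n ^ 2)) / 2)
     \<longleftrightarrow>
     ((\<lambda>eps. measure_pmf.expectation (bind_pmf (\<pi> eps) (lb_step (A eps) S r))
                (\<lambda>(u, q'). norm1 q' * norm1 u)) \<longlongrightarrow> 0) (at_right 0)"
proof -
  let ?MS = "\<Sum>n\<in>UNIV. \<mu> n" and ?\<nu>2 = "\<Sum>n\<in>UNIV. \<nu> n ^ 2" and ?K = "real (CARD('n) * Smax)"
  let ?slot = "\<lambda>eps. bind_pmf (\<pi> eps) (lb_step (A eps) S r)"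
  let ?V = "\<lambda>eps. measure_pmf.expectation (?slot eps) (\<lambda>x. (norm1 (fst x))\<^sup>2)"
  let ?G = "\<lambda>eps. measure_pmf.expectation (?slot eps) (\<lambda>(u, q'). norm1 q' * norm1 u)"
  let ?F = "\<lambda>eps. (measure_pmf.variance (A eps) real + ?\<nu>2 + eps\<^sup>2 - ?V eps) / 2"
  have identity: "eps * measure_pmf.expectation (\<pi> eps) norm1 = ?F eps + ?G eps \<and> 0 \<le> ?G eps
      \<and> 0 \<le> ?V eps \<and> ?V eps \<le> ?K * eps" if "0 < eps" "eps < ?MS" for eps
  proof -
    interpret stationary_lb "A eps" S r Smax "\<pi> eps"
      using A_fam S_bound pi_stat TO that unfolding throughput_optimal_def
      by unfold_locales (auto intro: finite_subset[of _ "{..Amax}"])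
    show ?thesis
      using heavy_traffic_identity[of \<mu> \<nu> eps] S_mean S_var A_fam that by auto
  qed
  have eventually_heavy_traffic: "eventually (\<lambda>eps. 0 < eps \<and> eps < ?MS) (at_right 0)"
    using mu_pos eventually_at_right_field by blast
  have "(?V \<longlongrightarrow> 0) (at_right 0)"
  proof (rule tendsto_sandwich[where f = "\<lambda>_. 0" and h = "\<lambda>eps. ?K * eps"])
    show "((\<lambda>eps. ?K * eps) \<longlongrightarrow> 0) (at_right 0)"
      by (auto intro!: tendsto_eq_intros)
  qed (use eventually_heavy_traffic identity in \<open>auto elim: eventually_mono\<close>)
  then have F_lim: "(?F \<longlongrightarrow> (\<sigma>2 + ?\<nu>2) / 2) (at_right 0)"
    by (auto intro!: tendsto_eq_intros A_var)
  have decomposition: "eventually (\<lambda>eps. eps * measure_pmf.expectation (\<pi> eps) norm1 = ?F eps + ?G eps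
      \<and> 0 \<le> ?G eps) (at_right 0)"
    using eventually_heavy_traffic by (rule eventually_mono) (use identity in blast)
  have norm1_eq: "(\<lambda>q. real (\<Sum>n\<in>UNIV. q n)) = norm1"
    by (simp add: norm1_def fun_eq_iff)
  show ?thesis
    unfolding norm1_eq by (rule Limsup_le_iff_remainder_tendsto_0[OF _ decomposition F_lim]) simp
qed

end
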